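(* Let $S$ be a spray on an $n$-dimensional manifold $M$ with horizontal and vertical projectors $h,v$, horizontal distribution $\mathcal H$ and vertical distribution $\mathcal V$, and let $\mathcal P$ be a smooth, nowhere vanishing function (on the open subset of $\mathcal TM$ considered), positively $1$-homogeneous in $y$ and holonomy invariant with respect to $S$. Define $$h_{\mathcal P}=h-\frac{d_J\mathcal P}{\mathcal P}\otimes S,\qquad v_{\mathcal P}=v-\frac{d_v\mathcal P}{\mathcal P}\otimes\mathcal C,\qquad \mathcal H_{\mathcal P}=\operatorname{Im}h_{\mathcal P},\quad \mathcal V_{\mathcal P}=\operatorname{Im}v_{\mathcal P}.$$ Then: (1) (i) $\ker v_{\mathcal P}=\mathcal H\oplus\operatorname{Span}\{\mathcal C\}$; (ii) $\mathcal V_{\mathcal P}$ is an $(n-1)$-dimensional involutive subdistribution of $\mathcal V$; (iii) every $X\in\mathcal V_{\mathcal P}$ satisfies $\mathcal L_X\mathcal P=0$; (iv) $\mathcal V=\mathcal V_{\mathcal P}\oplus\operatorname{Span}\{\mathcal C\}$. (2) (i) $\ker h_{\mathcal P}=\mathcal V\oplus\operatorname{Span}\{S\}$; (ii) $\mathcal H_{\mathcal P}$ is an $(n-1)$-dimensional subdistribution of $\mathcal H$; (iii) every $X\in\mathcal H_{\mathcal P}$ satisfies $\mathcal L_X\mathcal P=0$; (iv) $\mathcal H=\mathcal H_{\mathcal P}\oplus\operatorname{Span}\{S\}$. (3) $J(\mathcal H_{\mathcal P})=\mathcal V_{\mathcal P}$.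
   Context: $TM$ has induced coordinates $(x^i,y^i)$, $\mathcal{T}M=TM\setminus\{0\}$, $\mathcal C=y^i\frac{\partial}{\partial y^i}$ (Liouville vector field), $J=\frac{\partial}{\partial y^i}\otimes dx^i$. A spray is a vector field $S$ on $\mathcal TM$ with $JS=\mathcal C$, $[\mathcal C,S]=S$; locally $S=y^i\frac{\partial}{\partial x^i}-2G^i\frac{\partial}{\partial y^i}$, $G^i$ $2$-homogeneous in $y$. With $G^j_i=\partial G^j/\partial y^i$, $\delta_i=\frac{\partial}{\partial x^i}-G^j_i\frac{\partial}{\partial y^j}$, $\delta y^i=dy^i+G^i_jdx^j$: $h=\delta_i\otimes dx^i$, $v=\frac{\partial}{\partial y^i}\otimes\delta y^i$, $\mathcal H=\operatorname{Im}h$, $\mathcal V=\operatorname{Im}v=\ker d\pi$. For a function $f$ and vector $1$-form $L$, $d_Lf=df\circ L$ (so $(d_J\mathcal P)(X)=(JX)\mathcal P$, $(d_v\mathcal P)(X)=(vX)\mathcal P$); $\omega\otimes Y$ denotes $X\mapsto\omega(X)Y$. $\mathcal P$ is holonomy invariant if $d_h\mathcal P=0$, i.e. $X(\mathcal P)=0$ for all horizontal $X$. *)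

theory Defs
  imports "HOL-Analysis.Analysis"
begin

text \<open>Local (chart) model: a chart domain U of the n-manifold M is an open subset of
  real^'n (n = CARD('n)); TM over U is U \<times> real^'n with induced coordinates (x,y).
  Tangent vectors to TM at p are pairs (u,w) meaning u^i d/dx^i + w^i d/dy^i.\<close>

type_synonym ('n) tv = "(real^'n) \<times> (real^'n)"

fun Ck_on :: "nat \<Rightarrow> ('a::euclidean_space \<Rightarrow> 'b::real_normed_vector) \<Rightarrow> 'a set \<Rightarrow> bool" where
  "Ck_on 0 f S = continuous_on S f"
| "Ck_on (Suc k) f S = (f differentiable_on S \<and>
      (\<forall>v\<in>Basis. Ck_on k (\<lambda>x. frechet_derivative f (at x) v) S))"

definition smooth_on :: "('a::euclidean_space \<Rightarrow> 'b::real_normed_vector) \<Rightarrow> 'a set \<Rightarrow> bool" where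
  "smooth_on f S \<longleftrightarrow> (\<forall>k. Ck_on k f S)"

text \<open>Differential of a function on TM: (dP)_p(X) = X(P) = Lie derivative of P along X at p.\<close>
definition dfun :: "(('n::finite) tv \<Rightarrow> real) \<Rightarrow> 'n tv \<Rightarrow> 'n tv \<Rightarrow> real" where
  "dfun P p X = frechet_derivative P (at p) X"

text \<open>Nonlinear connection coefficients: (Gamma u)^j = G^j_i u^i, G^j_i = dG^j/dy^i.\<close>
definition Gamma :: "(('n::finite) tv \<Rightarrow> real^'n) \<Rightarrow> 'n tv \<Rightarrow> real^'n \<Rightarrow> real^'n" where
  "Gamma G p u = frechet_derivative (\<lambda>y. G (fst p, y)) (at (snd p)) u"

definition spray :: "(('n::finite) tv \<Rightarrow> real^'n) \<Rightarrow> 'n tv \<Rightarrow> 'n tv" where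
  "spray G p = (snd p, - (2 *\<^sub>R G p))"

definition liouville :: "('n::finite) tv \<Rightarrow> 'n tv" where
  "liouville p = (0, snd p)"

definition Jend :: "('n::finite) tv \<Rightarrow> 'n tv" where
  "Jend X = (0, fst X)"

text \<open>h = delta_i (x) dx^i, v = d/dy^i (x) delta y^i, with delta y^i = dy^i + G^i_j dx^j.\<close>
definition hproj :: "(('n::finite) tv \<Rightarrow> real^'n) \<Rightarrow> 'n tv \<Rightarrow> 'n tv \<Rightarrow> 'n tv" where
  "hproj G p X = (fst X, - Gamma G p (fst X))"

definition vproj :: "(('n::finite) tv \<Rightarrow> real^'n) \<Rightarrow> 'n tv \<Rightarrow> 'n tv \<Rightarrow> 'n tv" where
  "vproj G p X = (0, snd X + Gamma G p (fst X))"

definition Hdist :: "(('n::finite) tv \<Rightarrow> real^'n) \<Rightarrow> 'n tv \<Rightarrow> 'n tv set" where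
  "Hdist G p = range (hproj G p)"

text \<open>Vertical distribution = ker d pi.\<close>
definition Vdist :: "('n::finite) tv \<Rightarrow> 'n tv set" where
  "Vdist p = {X. fst X = 0}"

definition hP :: "(('n::finite) tv \<Rightarrow> real^'n) \<Rightarrow> (('n::finite) tv \<Rightarrow> real) \<Rightarrow> 'n tv \<Rightarrow> 'n tv \<Rightarrow> 'n tv" where
  "hP G P p X = hproj G p X - (dfun P p (Jend X) / P p) *\<^sub>R spray G p"

definition vP :: "(('n::finite) tv \<Rightarrow> real^'n) \<Rightarrow> (('n::finite) tv \<Rightarrow> real) \<Rightarrow> 'n tv \<Rightarrow> 'n tv \<Rightarrow> 'n tv" where
  "vP G P p X = vproj G p X - (dfun P p (vproj G p X) / P p) *\<^sub>R liouville p"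

definition HPdist :: "(('n::finite) tv \<Rightarrow> real^'n) \<Rightarrow> (('n::finite) tv \<Rightarrow> real) \<Rightarrow> 'n tv \<Rightarrow> 'n tv set" where
  "HPdist G P p = range (hP G P p)"

definition VPdist :: "(('n::finite) tv \<Rightarrow> real^'n) \<Rightarrow> (('n::finite) tv \<Rightarrow> real) \<Rightarrow> 'n tv \<Rightarrow> 'n tv set" where
  "VPdist G P p = range (vP G P p)"

definition is_direct_sum :: "'a::real_vector set \<Rightarrow> 'a set \<Rightarrow> 'a set \<Rightarrow> bool" where
  "is_direct_sum W A B \<longleftrightarrow> W = {a + b | a b. a \<in> A \<and> b \<in> B} \<and> A \<inter> B = {0}"

definition lie_bracket :: "(('n::finite) tv \<Rightarrow> 'n tv) \<Rightarrow> (('n::finite) tv \<Rightarrow> 'n tv) \<Rightarrow> 'n tv \<Rightarrow> 'n tv" where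
  "lie_bracket X Y p = frechet_derivative Y (at p) (X p) - frechet_derivative X (at p) (Y p)"

definition involutive :: "(('n::finite) tv \<Rightarrow> 'n tv set) \<Rightarrow> 'n tv set \<Rightarrow> bool" where
  "involutive Delta D \<longleftrightarrow>
     (\<forall>W X Y. open W \<and> W \<subseteq> D \<and> smooth_on X W \<and> smooth_on Y W \<and>
        (\<forall>q\<in>W. X q \<in> Delta q \<and> Y q \<in> Delta q) \<longrightarrow> (\<forall>q\<in>W. lie_bracket X Y q \<in> Delta q))"

end

theory Submission
  imports Defs
begin

(* At a point p = (x, y) everything is linear algebra. A tangent vector splits as
   X = hlift (dx X) + (0, delta_y X) along H and V. Euler's relation for the 2-homogeneous G
   makes the spray the horizontal lift of y, and for the 1-homogeneous P it gives
   dP(C) = P(p), which is nonzero. So, with l the restriction of dP to the fibre and pi the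
   projection of the fibre onto the hyperplane ker l along y, we get
   v_P X = (0, pi (delta_y X)) and h_P X = hlift (pi (dx X)); kernels, images, dimensions and
   J(H_P) = V_P are read off from these formulas, and holonomy invariance is needed only for
   dP to vanish on H_P.
   V_P is the intersection of V with ker dP. Brackets of vertical fields are vertical, and if
   X P = Y P = 0 near q, differentiating gives dP(DY X) = - d2P(Y, X) and
   dP(DX Y) = - d2P(X, Y), so dP [X, Y] = 0 by the symmetry of second derivatives, which is
   a consequence of the mean value theorem. *)

section \<open>Symmetry of second derivatives\<close>

lemma has_vector_derivative_along_line:
  fixes f :: "'a::real_normed_vector \<Rightarrow> 'b::real_normed_vector"
  assumes "(f has_derivative f') (at (a + s *\<^sub>R u))"
  shows "((\<lambda>s. f (a + s *\<^sub>R u)) has_vector_derivative f' u) (at s)"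
proof -
  have "((\<lambda>s. a + s *\<^sub>R u) has_derivative (\<lambda>h. h *\<^sub>R u)) (at s)"
    by (auto intro!: derivative_eq_intros)
  from has_derivative_compose[OF this assms]
  have "((\<lambda>s. f (a + s *\<^sub>R u)) has_derivative (\<lambda>h. f' (h *\<^sub>R u))) (at s)" .
  then show ?thesis
    using linear_scale[OF has_derivative_linear[OF assms]] by (simp add: has_vector_derivative_def)
qed

lemma has_real_derivative_along_line:
  fixes f :: "'a::real_normed_vector \<Rightarrow> real"
  assumes "(f has_derivative f') (at (a + s *\<^sub>R u))"
  shows "((\<lambda>s. f (a + s *\<^sub>R u)) has_real_derivative f' u) (at s)"
  using has_vector_derivative_along_line[OF assms] has_real_derivative_iff_has_vector_derivative
  by blast

lemma second_difference_mean_value: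
  fixes f :: "'a::real_normed_vector \<Rightarrow> real"
  assumes square: "\<And>\<sigma> \<tau>. 0 \<le> \<sigma> \<Longrightarrow> \<sigma> \<le> t \<Longrightarrow> 0 \<le> \<tau> \<Longrightarrow> \<tau> \<le> t \<Longrightarrow> x + \<sigma> *\<^sub>R u + \<tau> *\<^sub>R v \<in> S"
    and t: "0 < t"
    and f': "\<And>y. y \<in> S \<Longrightarrow> (f has_derivative f' y) (at y)"
    and g': "\<And>y. y \<in> S \<Longrightarrow> ((\<lambda>y. f' y u) has_derivative g' y) (at y)"
  obtains \<sigma> \<tau> where "0 < \<sigma>" "\<sigma> < t" "0 < \<tau>" "\<tau> < t"
    "f (x + t *\<^sub>R u + t *\<^sub>R v) - f (x + t *\<^sub>R u) - f (x + t *\<^sub>R v) + f x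
       = t * t * g' (x + \<sigma> *\<^sub>R u + \<tau> *\<^sub>R v) v"
proof -
  define \<phi> where "\<phi> s = f ((x + t *\<^sub>R v) + s *\<^sub>R u) - f (x + s *\<^sub>R u)" for s
  have "\<exists>\<sigma>. 0 < \<sigma> \<and> \<sigma> < t \<and>
      \<phi> t - \<phi> 0 = (t - 0) * (f' (x + t *\<^sub>R v + \<sigma> *\<^sub>R u) u - f' (x + \<sigma> *\<^sub>R u) u)"
  proof (rule MVT2[OF t])
    fix s assume s: "0 \<le> s" "s \<le> t"
    have "x + t *\<^sub>R v + s *\<^sub>R u \<in> S"
      using square[of s t] s t by (simp add: algebra_simps)
    moreover have "x + s *\<^sub>R u \<in> S"
      using square[of s 0] s t by simp
    ultimately show "(\<phi> has_real_derivative f' (x + t *\<^sub>R v + s *\<^sub>R u) u - f' (x + s *\<^sub>R u) u) (at s)"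
      unfolding \<phi>_def by (intro DERIV_diff has_real_derivative_along_line f')
  qed
  then obtain \<sigma> where \<sigma>: "0 < \<sigma>" "\<sigma> < t"
    and \<phi>_diff: "\<phi> t - \<phi> 0 = t * (f' (x + t *\<^sub>R v + \<sigma> *\<^sub>R u) u - f' (x + \<sigma> *\<^sub>R u) u)"
    by auto
  define \<psi> where "\<psi> s = f' ((x + \<sigma> *\<^sub>R u) + s *\<^sub>R v) u" for s
  have "\<exists>\<tau>. 0 < \<tau> \<and> \<tau> < t \<and> \<psi> t - \<psi> 0 = (t - 0) * g' (x + \<sigma> *\<^sub>R u + \<tau> *\<^sub>R v) v"
  proof (rule MVT2[OF t])
    fix s assume "0 \<le> s" "s \<le> t"
    then have "x + \<sigma> *\<^sub>R u + s *\<^sub>R v \<in> S"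
      using square \<sigma> by simp
    then show "(\<psi> has_real_derivative g' (x + \<sigma> *\<^sub>R u + s *\<^sub>R v) v) (at s)"
      unfolding \<psi>_def by (intro has_real_derivative_along_line g')
  qed
  then obtain \<tau> where \<tau>: "0 < \<tau>" "\<tau> < t" and \<psi>_diff: "\<psi> t - \<psi> 0 = t * g' (x + \<sigma> *\<^sub>R u + \<tau> *\<^sub>R v) v"
    by auto
  have "f (x + t *\<^sub>R u + t *\<^sub>R v) - f (x + t *\<^sub>R u) - f (x + t *\<^sub>R v) + f x = \<phi> t - \<phi> 0"
    unfolding \<phi>_def by (simp add: algebra_simps)
  also have "\<dots> = t * (\<psi> t - \<psi> 0)"
    unfolding \<phi>_diff \<psi>_def by (simp add: algebra_simps)
  also have "\<dots> = t * t * g' (x + \<sigma> *\<^sub>R u + \<tau> *\<^sub>R v) v"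
    using \<psi>_diff by simp
  finally show ?thesis
    using that \<sigma> \<tau> by blast
qed

lemma small_parallelogram_near:
  fixes x u v :: "'a::real_normed_vector"
  assumes "r > 0"
  obtains t where "t > 0"
    "\<And>\<sigma> \<tau>. 0 \<le> \<sigma> \<Longrightarrow> \<sigma> \<le> t \<Longrightarrow> 0 \<le> \<tau> \<Longrightarrow> \<tau> \<le> t \<Longrightarrow> dist (x + \<sigma> *\<^sub>R u + \<tau> *\<^sub>R v) x < r"
proof
  define c where "c = norm u + norm v + 1"
  have c: "c > 0"
    unfolding c_def by (simp add: add_nonneg_pos)
  show "r / c > 0"
    using assms c by simp
  fix \<sigma> \<tau> :: real
  assume "0 \<le> \<sigma>" "\<sigma> \<le> r / c" "0 \<le> \<tau>" "\<tau> \<le> r / c"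
  then have "\<sigma> * norm u + \<tau> * norm v \<le> r / c * norm u + r / c * norm v"
    by (intro add_mono mult_right_mono) auto
  also have "\<dots> = r / c * (c - 1)"
    by (simp add: c_def distrib_left)
  also have "\<dots> < r / c * c"
    using assms c by (intro mult_strict_left_mono) auto
  finally have "norm (\<sigma> *\<^sub>R u) + norm (\<tau> *\<^sub>R v) < r"
    using \<open>0 \<le> \<sigma>\<close> \<open>0 \<le> \<tau>\<close> c by simp
  then show "dist (x + \<sigma> *\<^sub>R u + \<tau> *\<^sub>R v) x < r"
    using norm_triangle_ineq[of "\<sigma> *\<^sub>R u" "\<tau> *\<^sub>R v"] by (simp add: dist_norm add.assoc)
qed

lemma mixed_partials_agree_nearby:
  fixes f :: "'a::real_normed_vector \<Rightarrow> real"
  assumes S: "open S" "x \<in> S"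
    and f': "\<And>y. y \<in> S \<Longrightarrow> (f has_derivative f' y) (at y)"
    and gu: "\<And>y. y \<in> S \<Longrightarrow> ((\<lambda>y. f' y u) has_derivative gu y) (at y)"
    and gv: "\<And>y. y \<in> S \<Longrightarrow> ((\<lambda>y. f' y v) has_derivative gv y) (at y)"
    and "d > 0"
  obtains y z where "dist y x < d" "dist z x < d" "gu y v = gv z u"
proof -
  obtain r where r: "r > 0" "ball x r \<subseteq> S"
    using S open_contains_ball by blast
  have "min r d > 0"
    using r \<open>d > 0\<close> by simp
  then obtain t where t: "t > 0" and close:
    "\<And>\<sigma> \<tau>. 0 \<le> \<sigma> \<Longrightarrow> \<sigma> \<le> t \<Longrightarrow> 0 \<le> \<tau> \<Longrightarrow> \<tau> \<le> t \<Longrightarrow> dist (x + \<sigma> *\<^sub>R u + \<tau> *\<^sub>R v) x < min r d"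
    using small_parallelogram_near[where x = x and u = u and v = v] by blast
  have square_uv: "x + \<sigma> *\<^sub>R u + \<tau> *\<^sub>R v \<in> S"
    if "0 \<le> \<sigma>" "\<sigma> \<le> t" "0 \<le> \<tau>" "\<tau> \<le> t" for \<sigma> \<tau>
    using close[OF that] r by (auto simp: dist_commute subset_iff)
  have square_vu: "x + \<sigma> *\<^sub>R v + \<tau> *\<^sub>R u \<in> S"
    if "0 \<le> \<sigma>" "\<sigma> \<le> t" "0 \<le> \<tau>" "\<tau> \<le> t" for \<sigma> \<tau>
    using square_uv[OF that(3,4,1,2)] by (simp add: algebra_simps)
  \<comment> \<open>the second difference of f over the square, expanded in the two orders\<close>
  obtain \<sigma>1 \<tau>1 where st1: "0 < \<sigma>1" "\<sigma>1 < t" "0 < \<tau>1" "\<tau>1 < t" and diff1: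
     "f (x + t *\<^sub>R u + t *\<^sub>R v) - f (x + t *\<^sub>R u) - f (x + t *\<^sub>R v) + f x
       = t * t * gu (x + \<sigma>1 *\<^sub>R u + \<tau>1 *\<^sub>R v) v"
    using second_difference_mean_value[OF square_uv t f' gu] by blast
  obtain \<sigma>2 \<tau>2 where st2: "0 < \<sigma>2" "\<sigma>2 < t" "0 < \<tau>2" "\<tau>2 < t" and diff2:
     "f (x + t *\<^sub>R v + t *\<^sub>R u) - f (x + t *\<^sub>R v) - f (x + t *\<^sub>R u) + f x
       = t * t * gv (x + \<sigma>2 *\<^sub>R v + \<tau>2 *\<^sub>R u) u"
    using second_difference_mean_value[OF square_vu t f' gv] by blast
  have "x + t *\<^sub>R v + t *\<^sub>R u = x + t *\<^sub>R u + t *\<^sub>R v"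
    by (simp add: algebra_simps)
  with diff1 diff2 t have "gu (x + \<sigma>1 *\<^sub>R u + \<tau>1 *\<^sub>R v) v = gv (x + \<tau>2 *\<^sub>R u + \<sigma>2 *\<^sub>R v) u"
    by (simp add: algebra_simps)
  moreover have "dist (x + \<sigma>1 *\<^sub>R u + \<tau>1 *\<^sub>R v) x < d" "dist (x + \<tau>2 *\<^sub>R u + \<sigma>2 *\<^sub>R v) x < d"
    using close[of \<sigma>1 \<tau>1] close[of \<tau>2 \<sigma>2] st1 st2 by simp_all
  ultimately show ?thesis
    using that by blast
qed

theorem second_derivative_symmetric:
  fixes f :: "'a::real_normed_vector \<Rightarrow> real"
  assumes S: "open S" "x \<in> S"
    and f': "\<And>y. y \<in> S \<Longrightarrow> (f has_derivative f' y) (at y)"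
    and gu: "\<And>y. y \<in> S \<Longrightarrow> ((\<lambda>y. f' y u) has_derivative gu y) (at y)"
    and gv: "\<And>y. y \<in> S \<Longrightarrow> ((\<lambda>y. f' y v) has_derivative gv y) (at y)"
    and gu_cont: "continuous_on S (\<lambda>y. gu y v)"
    and gv_cont: "continuous_on S (\<lambda>y. gv y u)"
  shows "gu x v = gv x u"
proof (rule ccontr)
  assume "gu x v \<noteq> gv x u"
  define e where "e = \<bar>gu x v - gv x u\<bar> / 2"
  have e: "e > 0"
    using \<open>gu x v \<noteq> gv x u\<close> unfolding e_def by simp
  obtain d1 where d1: "d1 > 0" "\<And>y. dist y x < d1 \<Longrightarrow> dist (gu y v) (gu x v) < e"
    using gu_cont S e by (metis continuous_on_eq_continuous_at continuous_at_eps_delta)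
  obtain d2 where d2: "d2 > 0" "\<And>y. dist y x < d2 \<Longrightarrow> dist (gv y u) (gv x u) < e"
    using gv_cont S e by (metis continuous_on_eq_continuous_at continuous_at_eps_delta)
  have "min d1 d2 > 0"
    using d1 d2 by simp
  then obtain y z where "dist y x < min d1 d2" "dist z x < min d1 d2" "gu y v = gv z u"
    using mixed_partials_agree_nearby[OF S f' gu gv] by blast
  then have "\<bar>gu x v - gv x u\<bar> < 2 * e"
    using d1(2)[of y] d2(2)[of z] by (simp add: dist_real_def)
  then show False
    unfolding e_def by simp
qed

lemma smooth_on_differentiable_at:
  fixes f :: "'a::euclidean_space \<Rightarrow> 'b::real_normed_vector"
  assumes "smooth_on f S" "open S" "x \<in> S"
  shows "f differentiable (at x)"
proof -
  have "Ck_on 1 f S"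
    using assms(1) unfolding smooth_on_def by blast
  then show ?thesis
    using assms(2,3) differentiable_on_eq_differentiable_at by auto
qed

lemma smooth_on_partial_differentiable_at:
  fixes f :: "'a::euclidean_space \<Rightarrow> 'b::real_normed_vector"
  assumes "smooth_on f S" "open S" "b \<in> Basis" "x \<in> S"
  shows "(\<lambda>y. frechet_derivative f (at y) b) differentiable (at x)"
proof -
  have "Ck_on 2 f S"
    using assms(1) unfolding smooth_on_def by blast
  then show ?thesis
    using assms(2-4) differentiable_on_eq_differentiable_at by (auto simp: numeral_2_eq_2)
qed

lemma smooth_on_second_partial_continuous:
  fixes f :: "'a::euclidean_space \<Rightarrow> 'b::real_normed_vector"
  assumes "smooth_on f S" "b \<in> Basis" "c \<in> Basis"
  shows "continuous_on S (\<lambda>y. frechet_derivative (\<lambda>y. frechet_derivative f (at y) b) (at y) c)"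
proof -
  have "Ck_on 2 f S"
    using assms(1) unfolding smooth_on_def by blast
  then show ?thesis
    using assms(2,3) by (simp add: numeral_2_eq_2)
qed

lemma smooth_on_second_partials_commute:
  fixes f :: "'a::euclidean_space \<Rightarrow> real"
  assumes f: "smooth_on f S" "open S" and "x \<in> S" "b \<in> Basis" "c \<in> Basis"
  shows "frechet_derivative (\<lambda>y. frechet_derivative f (at y) b) (at x) c
       = frechet_derivative (\<lambda>y. frechet_derivative f (at y) c) (at x) b"
proof (rule second_derivative_symmetric[where f' = "\<lambda>y. frechet_derivative f (at y)"])
  fix y assume "y \<in> S"
  then show "(f has_derivative frechet_derivative f (at y)) (at y)"
    and "((\<lambda>y. frechet_derivative f (at y) b) has_derivative
      frechet_derivative (\<lambda>y. frechet_derivative f (at y) b) (at y)) (at y)"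
    and "((\<lambda>y. frechet_derivative f (at y) c) has_derivative
      frechet_derivative (\<lambda>y. frechet_derivative f (at y) c) (at y)) (at y)"
    using smooth_on_differentiable_at[OF f] smooth_on_partial_differentiable_at[OF f] assms(4,5)
    by (simp_all add: frechet_derivative_works)
qed (use assms smooth_on_second_partial_continuous in auto)

section \<open>Functions annihilated by vector fields\<close>

lemma linear_real_eq_sum_Basis:
  fixes l :: "'a::euclidean_space \<Rightarrow> real"
  assumes "linear l"
  shows "l v = (\<Sum>b\<in>Basis. (v \<bullet> b) * l b)"
  using Linear_Algebra.linear_componentwise[OF assms, of v 1] by simp

lemma has_derivative_frechet_derivative_along_field:
  fixes f :: "'a::euclidean_space \<Rightarrow> real" and Y :: "'a \<Rightarrow> 'a"
  assumes f: "smooth_on f S" "open S" "q \<in> S" and Y: "(Y has_derivative Y') (at q)"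
  shows "((\<lambda>y. frechet_derivative f (at y) (Y y)) has_derivative
     (\<lambda>h. (\<Sum>b\<in>Basis. (Y q \<bullet> b) * frechet_derivative (\<lambda>y. frechet_derivative f (at y) b) (at q) h)
          + frechet_derivative f (at q) (Y' h))) (at q)"
proof -
  define df where "df b = (\<lambda>y. frechet_derivative f (at y) b)" for b
  define ddf where "ddf b = frechet_derivative (df b) (at q)" for b
  have expansion: "frechet_derivative f (at y) w = (\<Sum>b\<in>Basis. (w \<bullet> b) * df b y)" if "y \<in> S" for y w
    unfolding df_def using smooth_on_differentiable_at[OF f(1,2) that]
    by (intro linear_real_eq_sum_Basis linear_frechet_derivative)
  have "((\<lambda>y. (Y y \<bullet> b) * df b y) has_derivative
      (\<lambda>h. (Y q \<bullet> b) * ddf b h + (Y' h \<bullet> b) * df b q)) (at q)" if "b \<in> Basis" for b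
    using smooth_on_partial_differentiable_at[OF f(1,2) that f(3)]
    unfolding df_def ddf_def frechet_derivative_works
    by (rule has_derivative_mult[OF has_derivative_inner_left[OF Y]])
  then have "((\<lambda>y. \<Sum>b\<in>Basis. (Y y \<bullet> b) * df b y) has_derivative
      (\<lambda>h. \<Sum>b\<in>Basis. (Y q \<bullet> b) * ddf b h + (Y' h \<bullet> b) * df b q)) (at q)"
    by (rule has_derivative_sum)
  then have "((\<lambda>y. \<Sum>b\<in>Basis. (Y y \<bullet> b) * df b y) has_derivative
      (\<lambda>h. (\<Sum>b\<in>Basis. (Y q \<bullet> b) * ddf b h) + frechet_derivative f (at q) (Y' h))) (at q)"
    by (simp add: sum.distrib expansion[OF f(3)])
  then have "((\<lambda>y. frechet_derivative f (at y) (Y y)) has_derivative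
      (\<lambda>h. (\<Sum>b\<in>Basis. (Y q \<bullet> b) * ddf b h) + frechet_derivative f (at q) (Y' h))) (at q)"
    by (rule has_derivative_transform_within_open[OF _ f(2,3)]) (simp add: expansion)
  then show ?thesis
    unfolding ddf_def df_def .
qed

lemma frechet_derivative_annihilated_field:
  fixes f :: "'a::euclidean_space \<Rightarrow> real" and Y :: "'a \<Rightarrow> 'a"
  assumes f: "smooth_on f S" "open S" and W: "open W" "W \<subseteq> S" "q \<in> W"
    and Y: "Y differentiable (at q)"
    and annihilated: "\<And>y. y \<in> W \<Longrightarrow> frechet_derivative f (at y) (Y y) = 0"
  shows "frechet_derivative f (at q) (frechet_derivative Y (at q) h) =
     - (\<Sum>b\<in>Basis. (Y q \<bullet> b) * frechet_derivative (\<lambda>y. frechet_derivative f (at y) b) (at q) h)"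
proof -
  have "q \<in> S"
    using W by blast
  have "((\<lambda>y. frechet_derivative f (at y) (Y y)) has_derivative (\<lambda>h. 0)) (at q)"
    by (rule has_derivative_transform_within_open[OF has_derivative_const W(1,3)]) (simp add: annihilated)
  with has_derivative_frechet_derivative_along_field[OF f \<open>q \<in> S\<close>, of Y "frechet_derivative Y (at q)"]
  have "(\<lambda>h. (\<Sum>b\<in>Basis. (Y q \<bullet> b) * frechet_derivative (\<lambda>y. frechet_derivative f (at y) b) (at q) h)
          + frechet_derivative f (at q) (frechet_derivative Y (at q) h)) = (\<lambda>h. 0)"
    using Y has_derivative_unique unfolding frechet_derivative_works by blast
  then have "(\<Sum>b\<in>Basis. (Y q \<bullet> b) * frechet_derivative (\<lambda>y. frechet_derivative f (at y) b) (at q) h)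
      + frechet_derivative f (at q) (frechet_derivative Y (at q) h) = 0"
    by (rule fun_cong[where x = h, simplified])
  then show ?thesis
    by linarith
qed

lemma frechet_derivative_lie_bracket_annihilated:
  fixes f :: "'a::euclidean_space \<Rightarrow> real" and X Y :: "'a \<Rightarrow> 'a"
  assumes f: "smooth_on f S" "open S" and W: "open W" "W \<subseteq> S" "q \<in> W"
    and X: "X differentiable (at q)" and Y: "Y differentiable (at q)"
    and annihilated_X: "\<And>y. y \<in> W \<Longrightarrow> frechet_derivative f (at y) (X y) = 0"
    and annihilated_Y: "\<And>y. y \<in> W \<Longrightarrow> frechet_derivative f (at y) (Y y) = 0"
  shows "frechet_derivative f (at q)
           (frechet_derivative Y (at q) (X q) - frechet_derivative X (at q) (Y q)) = 0"
proof -
  define ddf where "ddf b = frechet_derivative (\<lambda>y. frechet_derivative f (at y) b) (at q)" for b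
  have "q \<in> S"
    using W by blast
  have ddf_expansion: "ddf b h = (\<Sum>c\<in>Basis. (h \<bullet> c) * ddf b c)" if "b \<in> Basis" for b h
    unfolding ddf_def using smooth_on_partial_differentiable_at[OF f that \<open>q \<in> S\<close>]
    by (intro linear_real_eq_sum_Basis linear_frechet_derivative)
  have ddf_symmetric: "ddf b c = ddf c b" if "b \<in> Basis" "c \<in> Basis" for b c
    unfolding ddf_def using smooth_on_second_partials_commute[OF f \<open>q \<in> S\<close> that] .
  have "(\<Sum>b\<in>Basis. (Y q \<bullet> b) * ddf b (X q)) = (\<Sum>b\<in>Basis. \<Sum>c\<in>Basis. (Y q \<bullet> b) * (X q \<bullet> c) * ddf b c)"
    by (intro sum.cong refl) (simp add: ddf_expansion[of _ "X q"] sum_distrib_left mult.assoc)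
  also have "\<dots> = (\<Sum>c\<in>Basis. \<Sum>b\<in>Basis. (X q \<bullet> c) * (Y q \<bullet> b) * ddf c b)"
    by (subst sum.swap) (intro sum.cong refl, simp add: ddf_symmetric)
  also have "\<dots> = (\<Sum>c\<in>Basis. (X q \<bullet> c) * ddf c (Y q))"
    by (intro sum.cong refl) (simp add: ddf_expansion[of _ "Y q"] sum_distrib_left mult.assoc)
  finally show ?thesis
    using frechet_derivative_annihilated_field[OF f W Y annihilated_Y, of "X q"]
      frechet_derivative_annihilated_field[OF f W X annihilated_X, of "Y q"]
      linear_diff[OF linear_frechet_derivative[OF smooth_on_differentiable_at[OF f \<open>q \<in> S\<close>]]]
    unfolding ddf_def by simp
qed

lemma fst_frechet_derivative_eq_0:
  fixes Y :: "'a::real_normed_vector \<Rightarrow> 'b::real_normed_vector \<times> 'c::real_normed_vector"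
  assumes "open W" "q \<in> W" "Y differentiable (at q)" "\<And>y. y \<in> W \<Longrightarrow> fst (Y y) = 0"
  shows "fst (frechet_derivative Y (at q) h) = 0"
proof -
  have "((\<lambda>y. fst (Y y)) has_derivative (\<lambda>h. fst (frechet_derivative Y (at q) h))) (at q)"
    using assms(3) unfolding frechet_derivative_works by (rule has_derivative_fst)
  moreover have "((\<lambda>y. fst (Y y)) has_derivative (\<lambda>h. 0)) (at q)"
    by (rule has_derivative_transform_within_open[OF has_derivative_const assms(1,2)]) (simp add: assms(4))
  ultimately have "(\<lambda>h. fst (frechet_derivative Y (at q) h)) = (\<lambda>h. 0)"
    by (rule has_derivative_unique)
  then show ?thesis
    by (rule fun_cong[where x = h, simplified])
qed

section \<open>Projection onto a hyperplane along a vector\<close>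

definition proj_ker_along :: "('a::real_vector \<Rightarrow> real) \<Rightarrow> 'a \<Rightarrow> 'a \<Rightarrow> 'a" where
  "proj_ker_along l y w = w - (l w / l y) *\<^sub>R y"

context
  fixes l :: "'a::real_vector \<Rightarrow> real" and y :: 'a
  assumes l: "linear l" and ly: "l y \<noteq> 0"
begin

lemma proj_ker_along_in_ker: "l (proj_ker_along l y w) = 0"
  using ly by (simp add: proj_ker_along_def linear_diff[OF l] linear_scale[OF l])

lemma proj_ker_along_ker: "l w = 0 \<Longrightarrow> proj_ker_along l y w = w"
  by (simp add: proj_ker_along_def)

lemma range_proj_ker_along: "range (proj_ker_along l y) = {w. l w = 0}"
  using proj_ker_along_in_ker proj_ker_along_ker by auto (metis rangeI)

lemma proj_ker_along_eq_0_iff: "proj_ker_along l y w = 0 \<longleftrightarrow> w \<in> span {y}"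
proof
  assume "proj_ker_along l y w = 0"
  then have "w = (l w / l y) *\<^sub>R y"
    by (simp add: proj_ker_along_def)
  then show "w \<in> span {y}"
    by (metis span_base span_scale singletonI)
next
  assume "w \<in> span {y}"
  then obtain c where "w = c *\<^sub>R y"
    by (auto simp: span_singleton)
  then show "proj_ker_along l y w = 0"
    using ly by (simp add: proj_ker_along_def linear_scale[OF l])
qed

lemma is_direct_sum_ker_span: "is_direct_sum UNIV {w. l w = 0} (span {y})"
  unfolding is_direct_sum_def
proof (intro conjI)
  have "w = proj_ker_along l y w + (l w / l y) *\<^sub>R y" for w
    by (simp add: proj_ker_along_def)
  then show "UNIV = {a + b |a b. a \<in> {w. l w = 0} \<and> b \<in> span {y}}"
    using proj_ker_along_in_ker by (blast intro: span_base span_scale)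
  show "{w. l w = 0} \<inter> span {y} = {0}"
  proof (intro set_eqI iffI)
    fix w assume "w \<in> {w. l w = 0} \<inter> span {y}"
    then show "w \<in> {0}"
      using proj_ker_along_eq_0_iff proj_ker_along_ker by force
  qed (simp_all add: linear_0[OF l] span_zero)
qed

end

lemma is_direct_sum_linear_image:
  assumes "linear f" "inj f" "is_direct_sum W A B"
  shows "is_direct_sum (f ` W) (f ` A) (f ` B)"
proof -
  have "f ` {a + b |a b. a \<in> A \<and> b \<in> B} = {a + b |a b. a \<in> f ` A \<and> b \<in> f ` B}"
    by (fastforce simp: linear_add[OF assms(1)] image_iff)
  moreover have "f ` A \<inter> f ` B = f ` (A \<inter> B)"
    using assms(2) by (simp add: image_Int)
  ultimately show ?thesis
    using assms(3) linear_0[OF assms(1)] by (simp add: is_direct_sum_def)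
qed

lemma is_direct_sum_preimage_kernel:
  assumes "linear \<nu>" "linear \<sigma>" "\<And>w. \<nu> (\<sigma> w) = w" "subspace S"
  shows "is_direct_sum (\<nu> -` S) {X. \<nu> X = 0} (\<sigma> ` S)"
  unfolding is_direct_sum_def
proof (intro conjI set_eqI iffI)
  fix X assume "X \<in> \<nu> -` S"
  moreover have "X = (X - \<sigma> (\<nu> X)) + \<sigma> (\<nu> X)" "\<nu> (X - \<sigma> (\<nu> X)) = 0"
    using assms(3) linear_diff[OF assms(1)] by auto
  ultimately show "X \<in> {a + b |a b. a \<in> {X. \<nu> X = 0} \<and> b \<in> \<sigma> ` S}"
    by blast
next
  fix X assume "X \<in> {a + b |a b. a \<in> {X. \<nu> X = 0} \<and> b \<in> \<sigma> ` S}"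
  then show "X \<in> \<nu> -` S"
    using assms(3) linear_add[OF assms(1)] by auto
next
  fix X assume "X \<in> {X. \<nu> X = 0} \<inter> \<sigma> ` S"
  then show "X \<in> {0}"
    using assms(3) linear_0[OF assms(2)] by auto
next
  fix X :: 'a assume "X \<in> {0}"
  then show "X \<in> {X. \<nu> X = 0} \<inter> \<sigma> ` S"
    using linear_0[OF assms(1)] linear_0[OF assms(2)] subspace_0[OF assms(4)] by force
qed

lemma dim_linear_image_ker:
  fixes l :: "'a::euclidean_space \<Rightarrow> real" and f :: "'a \<Rightarrow> 'b::real_vector"
  assumes "linear l" "l y \<noteq> 0" "linear f" "inj f"
  shows "dim (f ` {w. l w = 0}) = DIM('a) - 1"
proof -
  define a where "a = adjoint l 1"
  have l_inner: "l w = a \<bullet> w" for w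
    using adjoint_clauses(2)[OF assms(1), of 1 w] unfolding a_def by simp
  then have "a \<noteq> 0"
    using assms(2) by auto
  have "dim (f ` {w. l w = 0}) = dim {w. l w = 0}"
    using assms(3,4) by (intro dim_image_eq) (auto simp: inj_on_def inj_def)
  also have "\<dots> = DIM('a) - 1"
    using dim_hyperplane[OF \<open>a \<noteq> 0\<close>] by (simp add: l_inner)
  finally show ?thesis .
qed

section \<open>The horizontal and vertical splitting at a point\<close>

definition hlift :: "(('n::finite) tv \<Rightarrow> real^'n) \<Rightarrow> 'n tv \<Rightarrow> real^'n \<Rightarrow> 'n tv" where
  "hlift G p u = (u, - Gamma G p u)"

definition delta_y :: "(('n::finite) tv \<Rightarrow> real^'n) \<Rightarrow> 'n tv \<Rightarrow> 'n tv \<Rightarrow> real^'n" where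
  "delta_y G p X = snd X + Gamma G p (fst X)"

lemma hproj_eq_hlift: "hproj G p X = hlift G p (fst X)"
  by (simp add: hproj_def hlift_def)

lemma vproj_eq_delta_y: "vproj G p X = (0, delta_y G p X)"
  by (simp add: vproj_def delta_y_def)

lemma Hdist_eq_range_hlift: "Hdist G p = range (hlift G p)"
  unfolding Hdist_def hproj_eq_hlift by (metis fst_conv range_composition surj_def)

lemma hlift_plus_delta_y: "hlift G p (fst X) + (0, delta_y G p X) = X"
  by (simp add: hlift_def delta_y_def prod_eq_iff)

lemma linear_Pair_zero: "linear (Pair (0::'a::real_vector) :: 'b::real_vector \<Rightarrow> 'a \<times> 'b)"
  by (rule linearI) (simp_all add: prod_eq_iff)

lemma inj_Pair_zero: "inj (Pair 0)"
  by (rule injI) simp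

locale connection_at =
  fixes G :: "('n::finite) tv \<Rightarrow> real^'n" and p :: "'n tv"
  assumes linear_Gamma: "linear (Gamma G p)"
begin

lemma linear_hlift: "linear (hlift G p)"
  unfolding hlift_def
  by (rule linearI) (simp_all add: linear_add[OF linear_Gamma] linear_scale[OF linear_Gamma])

lemma inj_hlift: "inj (hlift G p)"
  by (rule injI) (simp add: hlift_def)

lemma linear_delta_y: "linear (delta_y G p)"
  unfolding delta_y_def
  by (rule linearI) (simp_all add: linear_add[OF linear_Gamma] linear_scale[OF linear_Gamma] algebra_simps)

lemma hlift_eq_0_iff: "hlift G p u = 0 \<longleftrightarrow> u = 0"
  by (auto simp: hlift_def zero_prod_def linear_0[OF linear_Gamma])

lemma delta_y_hlift [simp]: "delta_y G p (hlift G p u) = 0"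
  by (simp add: delta_y_def hlift_def)

lemma delta_y_vertical [simp]: "delta_y G p (0, w) = w"
  by (simp add: delta_y_def linear_0[OF linear_Gamma])

lemma Hdist_eq_ker_delta_y: "Hdist G p = {X. delta_y G p X = 0}"
  unfolding Hdist_eq_range_hlift
proof (intro set_eqI iffI)
  fix X assume "X \<in> {X. delta_y G p X = 0}"
  then have "X = hlift G p (fst X)"
    using hlift_plus_delta_y[of G p X] by (simp flip: zero_prod_def)
  then show "X \<in> range (hlift G p)"
    by (rule range_eqI)
qed auto

end

(* Gamma_snd and dP_liouville are Euler's relations for G and P at p. *)
locale holonomy_invariant_at = connection_at G p
  for G :: "('n::finite) tv \<Rightarrow> real^'n" and p :: "'n tv" +
  fixes P :: "'n tv \<Rightarrow> real"
  assumes Gamma_snd: "Gamma G p (snd p) = 2 *\<^sub>R G p"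
    and linear_dP: "linear (dfun P p)"
    and dP_liouville: "dfun P p (liouville p) = P p"
    and P_nonzero: "P p \<noteq> 0"
    and dP_horizontal: "X \<in> Hdist G p \<Longrightarrow> dfun P p X = 0"
begin

abbreviation dP_vert :: "real^'n \<Rightarrow> real" where
  "dP_vert w \<equiv> dfun P p (0, w)"

lemma linear_dP_vert: "linear dP_vert"
  using linear_compose[OF linear_Pair_zero linear_dP] by (simp add: o_def)

lemma dP_vert_snd: "dP_vert (snd p) = P p"
  using dP_liouville by (simp add: liouville_def)

lemma dP_vert_snd_nonzero: "dP_vert (snd p) \<noteq> 0"
  using dP_vert_snd P_nonzero by simp

lemma spray_eq_hlift: "spray G p = hlift G p (snd p)"
  by (simp add: spray_def hlift_def Gamma_snd)

lemma vP_eq: "vP G P p X = (0, proj_ker_along dP_vert (snd p) (delta_y G p X))"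
  by (simp add: vP_def vproj_eq_delta_y liouville_def proj_ker_along_def dP_vert_snd)

lemma hP_eq: "hP G P p X = hlift G p (proj_ker_along dP_vert (snd p) (fst X))"
  by (simp add: hP_def hproj_eq_hlift spray_eq_hlift Jend_def proj_ker_along_def dP_vert_snd
      linear_diff[OF linear_hlift] linear_scale[OF linear_hlift])

lemma VPdist_eq: "VPdist G P p = Pair 0 ` {w. dP_vert w = 0}"
proof -
  have "range (delta_y G p) = UNIV"
    by (metis delta_y_vertical surj_def)
  then have "VPdist G P p = Pair 0 ` range (proj_ker_along dP_vert (snd p))"
    unfolding VPdist_def vP_eq by (metis image_image)
  then show ?thesis
    unfolding range_proj_ker_along[OF linear_dP_vert dP_vert_snd_nonzero] .
qed

lemma HPdist_eq: "HPdist G P p = hlift G p ` {w. dP_vert w = 0}"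
proof -
  have "HPdist G P p = hlift G p ` range (proj_ker_along dP_vert (snd p))"
    unfolding HPdist_def hP_eq by (metis image_image range_fst)
  then show ?thesis
    unfolding range_proj_ker_along[OF linear_dP_vert dP_vert_snd_nonzero] .
qed

lemma VPdist_eq_vertical_annihilator: "VPdist G P p = {Z. fst Z = 0 \<and> dfun P p Z = 0}"
proof -
  have "(u, w) \<in> Pair 0 ` {w. dP_vert w = 0} \<longleftrightarrow> u = 0 \<and> dfun P p (u, w) = 0" for u w
    by auto
  then show ?thesis
    unfolding VPdist_eq set_eq_iff split_paired_All by simp
qed

lemma span_liouville: "span {liouville p} = Pair 0 ` span {snd p}"
  using span_linear_image[OF linear_Pair_zero, of "{snd p}"] by (simp add: liouville_def)

lemma span_spray: "span {spray G p} = hlift G p ` span {snd p}"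
  using span_linear_image[OF linear_hlift, of "{snd p}"] by (simp add: spray_eq_hlift)

lemma is_direct_sum_ker_vP: "is_direct_sum {X. vP G P p X = 0} (Hdist G p) (span {liouville p})"
proof -
  have "{X. vP G P p X = 0} = delta_y G p -` span {snd p}"
    using proj_ker_along_eq_0_iff[OF linear_dP_vert dP_vert_snd_nonzero]
    unfolding vimage_def by (simp add: vP_eq zero_prod_def)
  then show ?thesis
    unfolding Hdist_eq_ker_delta_y span_liouville
    using is_direct_sum_preimage_kernel[OF linear_delta_y linear_Pair_zero delta_y_vertical subspace_span]
    by simp
qed

lemma is_direct_sum_ker_hP: "is_direct_sum {X. hP G P p X = 0} (Vdist p) (span {spray G p})"
proof -
  have "{X. hP G P p X = 0} = fst -` span {snd p}"
    using proj_ker_along_eq_0_iff[OF linear_dP_vert dP_vert_snd_nonzero]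
    unfolding vimage_def by (simp add: hP_eq hlift_eq_0_iff)
  moreover have "fst (hlift G p u) = u" for u
    by (simp add: hlift_def)
  ultimately show ?thesis
    unfolding Vdist_def span_spray
    using is_direct_sum_preimage_kernel[OF linear_fst linear_hlift _ subspace_span] by simp
qed

lemma is_direct_sum_Vdist: "is_direct_sum (Vdist p) (VPdist G P p) (span {liouville p})"
proof -
  have "Vdist p = range (Pair 0)"
    by (auto simp: Vdist_def image_iff intro: exI[of _ "snd _"])
  then show ?thesis
    unfolding VPdist_eq span_liouville
    using is_direct_sum_linear_image[OF linear_Pair_zero inj_Pair_zero
        is_direct_sum_ker_span[OF linear_dP_vert dP_vert_snd_nonzero]]
    by simp
qed

lemma is_direct_sum_Hdist: "is_direct_sum (Hdist G p) (HPdist G P p) (span {spray G p})"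
  unfolding Hdist_eq_range_hlift HPdist_eq span_spray
  by (rule is_direct_sum_linear_image[OF linear_hlift inj_hlift
        is_direct_sum_ker_span[OF linear_dP_vert dP_vert_snd_nonzero]])

lemma dim_VPdist: "dim (VPdist G P p) = CARD('n) - 1"
  unfolding VPdist_eq
  using dim_linear_image_ker[OF linear_dP_vert dP_vert_snd_nonzero linear_Pair_zero inj_Pair_zero]
  by simp

lemma dim_HPdist: "dim (HPdist G P p) = CARD('n) - 1"
  unfolding HPdist_eq
  using dim_linear_image_ker[OF linear_dP_vert dP_vert_snd_nonzero linear_hlift inj_hlift]
  by simp

lemma VPdist_subset_Vdist: "VPdist G P p \<subseteq> Vdist p"
  by (auto simp: VPdist_eq Vdist_def)

lemma HPdist_subset_Hdist: "HPdist G P p \<subseteq> Hdist G p"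
  by (auto simp: HPdist_eq Hdist_eq_range_hlift)

lemma dP_VPdist: "X \<in> VPdist G P p \<Longrightarrow> dfun P p X = 0"
  by (simp add: VPdist_eq_vertical_annihilator)

lemma dP_HPdist: "X \<in> HPdist G P p \<Longrightarrow> dfun P p X = 0"
  using HPdist_subset_Hdist dP_horizontal by blast

lemma Jend_HPdist: "Jend ` HPdist G P p = VPdist G P p"
  by (simp add: HPdist_eq VPdist_eq image_image Jend_def hlift_def)

end

section \<open>Sprays and holonomy invariant functions\<close>

lemma euler_homogeneous:
  fixes f :: "'a::real_normed_vector \<Rightarrow> 'b::real_normed_vector"
  assumes f': "(f has_derivative f') (at (b + a))"
    and hom: "\<And>t. t > 0 \<Longrightarrow> f (b + t *\<^sub>R a) = t ^ k *\<^sub>R f (b + a)"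
  shows "f' a = real k *\<^sub>R f (b + a)"
proof -
  have along: "((\<lambda>t. f (b + t *\<^sub>R a)) has_vector_derivative f' a) (at 1)"
    using has_vector_derivative_along_line[of f f' b 1 a] f' by simp
  have "((\<lambda>t. t ^ k *\<^sub>R f (b + a)) has_vector_derivative real k *\<^sub>R f (b + a)) (at 1)"
    by (auto intro!: derivative_eq_intros)
  then have power: "((\<lambda>t. f (b + t *\<^sub>R a)) has_vector_derivative real k *\<^sub>R f (b + a)) (at 1)"
    by (rule has_vector_derivative_transform_within_open[of _ _ _ "{0<..}"]) (auto simp: hom)
  show ?thesis
    using vector_derivative_unique_at[OF along power] .
qed

lemma has_derivative_Gamma:
  fixes G :: "('n::finite) tv \<Rightarrow> real^'n"
  assumes "G differentiable (at p)"
  shows "((\<lambda>z. G (fst p, z)) has_derivative Gamma G p) (at (snd p))"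
proof -
  obtain G' where "(G has_derivative G') (at (fst p, snd p))"
    using assms by (auto simp: differentiable_def)
  moreover have "((\<lambda>z. (fst p, z)) has_derivative (\<lambda>h. (0, h))) (at (snd p))"
    by (auto intro!: derivative_eq_intros)
  ultimately have "((\<lambda>z. G (fst p, z)) has_derivative (\<lambda>h. G' (0, h))) (at (snd p))"
    using has_derivative_compose by blast
  then show ?thesis
    unfolding Gamma_def by (metis differentiableI frechet_derivative_works)
qed

lemma holonomy_invariant_at_spray:
  fixes U :: "(real^('n::finite)) set" and G :: "'n tv \<Rightarrow> real^'n"
    and D :: "'n tv set" and P :: "'n tv \<Rightarrow> real"
  assumes U_open: "open U"
    and G_smooth: "smooth_on G (U \<times> (UNIV - {0}))"
    and G_hom: "\<And>x y t. x \<in> U \<Longrightarrow> y \<noteq> 0 \<Longrightarrow> t > 0 \<Longrightarrow> G (x, t *\<^sub>R y) = t\<^sup>2 *\<^sub>R G (x, y)"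
    and D_open: "open D"
    and D_sub: "D \<subseteq> U \<times> (UNIV - {0})"
    and P_smooth: "smooth_on P D"
    and P_nz: "\<And>p. p \<in> D \<Longrightarrow> P p \<noteq> 0"
    and P_hom: "\<And>x y t. (x, y) \<in> D \<Longrightarrow> t > 0 \<Longrightarrow> P (x, t *\<^sub>R y) = t * P (x, y)"
    and P_hol: "\<And>p X. p \<in> D \<Longrightarrow> X \<in> Hdist G p \<Longrightarrow> dfun P p X = 0"
    and "p \<in> D"
  shows "holonomy_invariant_at G p P"
proof -
  obtain x y where p: "p = (x, y)"
    by (cases p)
  have "x \<in> U" "y \<noteq> 0"
    using D_sub \<open>p \<in> D\<close> p by auto
  have "open (U \<times> (UNIV - {0::real^'n}))"
    using U_open by (intro open_Times) auto
  then have "G differentiable (at p)"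
    using smooth_on_differentiable_at[OF G_smooth] D_sub \<open>p \<in> D\<close> by blast
  then have Gamma: "((\<lambda>z. G (x, z)) has_derivative Gamma G p) (at (0 + y))"
    using has_derivative_Gamma p by fastforce
  have "P differentiable (at p)"
    using smooth_on_differentiable_at[OF P_smooth D_open \<open>p \<in> D\<close>] .
  then have dP: "(P has_derivative dfun P p) (at ((x, 0) + (0, y)))"
    unfolding dfun_def p by (simp add: frechet_derivative_works)
  show ?thesis
  proof (intro holonomy_invariant_at.intro connection_at.intro holonomy_invariant_at_axioms.intro)
    show "linear (Gamma G p)"
      using has_derivative_linear[OF Gamma] .
    show "Gamma G p (snd p) = 2 *\<^sub>R G p"
      using euler_homogeneous[OF Gamma, of 2] G_hom[OF \<open>x \<in> U\<close> \<open>y \<noteq> 0\<close>] p by simp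
    show "linear (dfun P p)"
      using has_derivative_linear[OF dP] .
    show "dfun P p (liouville p) = P p"
      using euler_homogeneous[OF dP, of 1] P_hom \<open>p \<in> D\<close> p by (simp add: liouville_def)
  qed (use P_nz P_hol \<open>p \<in> D\<close> in auto)
qed

lemma involutive_if_eq_on:
  assumes "involutive \<Delta>' D" "\<And>q. q \<in> D \<Longrightarrow> \<Delta> q = \<Delta>' q"
  shows "involutive \<Delta> D"
  unfolding involutive_def
proof (intro allI impI ballI)
  fix W X Y q
  assume H: "open W \<and> W \<subseteq> D \<and> smooth_on X W \<and> smooth_on Y W \<and> (\<forall>q\<in>W. X q \<in> \<Delta> q \<and> Y q \<in> \<Delta> q)"
    and "q \<in> W"
  have "X q' \<in> \<Delta>' q' \<and> Y q' \<in> \<Delta>' q'" if "q' \<in> W" for q'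
    using H that assms(2)[of q'] by auto
  then have "lie_bracket X Y q \<in> \<Delta>' q"
    using assms(1) H \<open>q \<in> W\<close> unfolding involutive_def by blast
  then show "lie_bracket X Y q \<in> \<Delta> q"
    using assms(2)[of q] H \<open>q \<in> W\<close> by auto
qed

lemma involutive_vertical_annihilator:
  fixes P :: "('n::finite) tv \<Rightarrow> real"
  assumes P: "smooth_on P D" "open D"
  shows "involutive (\<lambda>q. {Z. fst Z = 0 \<and> dfun P q Z = 0}) D"
  unfolding involutive_def
proof (intro allI impI ballI)
  fix W X Y q
  assume "open W \<and> W \<subseteq> D \<and> smooth_on X W \<and> smooth_on Y W \<and>
    (\<forall>q\<in>W. X q \<in> {Z. fst Z = 0 \<and> dfun P q Z = 0} \<and> Y q \<in> {Z. fst Z = 0 \<and> dfun P q Z = 0})"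
  then have W: "open W" "W \<subseteq> D" and "smooth_on X W" "smooth_on Y W"
    and X_tangent: "\<And>y. y \<in> W \<Longrightarrow> fst (X y) = 0 \<and> frechet_derivative P (at y) (X y) = 0"
    and Y_tangent: "\<And>y. y \<in> W \<Longrightarrow> fst (Y y) = 0 \<and> frechet_derivative P (at y) (Y y) = 0"
    by (auto simp: dfun_def)
  assume "q \<in> W"
  have X: "X differentiable (at q)" and Y: "Y differentiable (at q)"
    using smooth_on_differentiable_at \<open>smooth_on X W\<close> \<open>smooth_on Y W\<close> W(1) \<open>q \<in> W\<close> by blast+
  have "fst (lie_bracket X Y q) = 0"
    using fst_frechet_derivative_eq_0[OF W(1) \<open>q \<in> W\<close> Y, of "X q"]
      fst_frechet_derivative_eq_0[OF W(1) \<open>q \<in> W\<close> X, of "Y q"] X_tangent Y_tangent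
    by (simp add: lie_bracket_def)
  moreover have "dfun P q (lie_bracket X Y q) = 0"
    unfolding lie_bracket_def dfun_def
    using frechet_derivative_lie_bracket_annihilated[OF P W \<open>q \<in> W\<close> X Y] X_tangent Y_tangent by blast
  ultimately show "lie_bracket X Y q \<in> {Z. fst Z = 0 \<and> dfun P q Z = 0}"
    by simp
qed

theorem lemma3p2:
  fixes U :: "(real^('n::finite)) set" and G :: "('n::finite) tv \<Rightarrow> real^'n"
    and D :: "('n::finite) tv set" and P :: "'n tv \<Rightarrow> real"
  assumes U_open: "open U"
    and G_smooth: "smooth_on G (U \<times> (UNIV - {0}))"
    and G_hom: "\<And>x y t. x \<in> U \<Longrightarrow> y \<noteq> 0 \<Longrightarrow> t > 0 \<Longrightarrow> G (x, t *\<^sub>R y) = t\<^sup>2 *\<^sub>R G (x, y)"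
    and D_open: "open D"
    and D_sub: "D \<subseteq> U \<times> (UNIV - {0})"
    and D_conic: "\<And>x y t. (x, y) \<in> D \<Longrightarrow> t > 0 \<Longrightarrow> (x, t *\<^sub>R y) \<in> D"
    and P_smooth: "smooth_on P D"
    and P_nz: "\<And>p. p \<in> D \<Longrightarrow> P p \<noteq> 0"
    and P_hom: "\<And>x y t. (x, y) \<in> D \<Longrightarrow> t > 0 \<Longrightarrow> P (x, t *\<^sub>R y) = t * P (x, y)"
    and P_hol: "\<And>p X. p \<in> D \<Longrightarrow> X \<in> Hdist G p \<Longrightarrow> dfun P p X = 0"
  shows
    "(\<forall>p\<in>D.
        is_direct_sum {X. vP G P p X = 0} (Hdist G p) (span {liouville p})
      \<and> VPdist G P p \<subseteq> Vdist p \<and> dim (VPdist G P p) = CARD('n) - 1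
      \<and> (\<forall>X\<in>VPdist G P p. dfun P p X = 0)
      \<and> is_direct_sum (Vdist p) (VPdist G P p) (span {liouville p}))
   \<and> involutive (VPdist G P) D
   \<and> (\<forall>p\<in>D.
        is_direct_sum {X. hP G P p X = 0} (Vdist p) (span {spray G p})
      \<and> HPdist G P p \<subseteq> Hdist G p \<and> dim (HPdist G P p) = CARD('n) - 1
      \<and> (\<forall>X\<in>HPdist G P p. dfun P p X = 0)
      \<and> is_direct_sum (Hdist G p) (HPdist G P p) (span {spray G p}))
   \<and> (\<forall>p\<in>D. Jend ` HPdist G P p = VPdist G P p)"
proof -
  have pointwise: "holonomy_invariant_at G p P" if "p \<in> D" for p
    by (rule holonomy_invariant_at_spray[OF U_open G_smooth G_hom D_open D_sub P_smooth P_nz P_hom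
          P_hol that])
  have "involutive (VPdist G P) D"
    using involutive_vertical_annihilator[OF P_smooth D_open]
    by (rule involutive_if_eq_on)
      (rule holonomy_invariant_at.VPdist_eq_vertical_annihilator[OF pointwise])
  then show ?thesis
    using holonomy_invariant_at.is_direct_sum_ker_vP[OF pointwise]
      holonomy_invariant_at.VPdist_subset_Vdist[OF pointwise]
      holonomy_invariant_at.dim_VPdist[OF pointwise] holonomy_invariant_at.dP_VPdist[OF pointwise]
      holonomy_invariant_at.is_direct_sum_Vdist[OF pointwise]
      holonomy_invariant_at.is_direct_sum_ker_hP[OF pointwise]
      holonomy_invariant_at.HPdist_subset_Hdist[OF pointwise]
      holonomy_invariant_at.dim_HPdist[OF pointwise] holonomy_invariant_at.dP_HPdist[OF pointwise]
      holonomy_invariant_at.is_direct_sum_Hdist[OF pointwise]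
      holonomy_invariant_at.Jend_HPdist[OF pointwise]
    by blast
qed

end
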